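(* Let $\sigma>0$, $b:\mathbb R^d\to\mathbb R^d$, and let $\kappa:(0,\infty)\to\mathbb R$ satisfy $\kappa(r)\le\inf\{-\frac{2}{\sigma^2}\frac{(x-y)\cdot(b(x)-b(y))}{|x-y|^2}: x,y\in\mathbb R^d,\ |x-y|=r\}$, and suppose $\kappa$ is continuous on $(0,\infty)$, bounded below on $(0,\infty)$, and $\liminf_{r\to\infty}\kappa(r)>0$. Then there exists a function $f:[0,\infty)\to\mathbb R$ such that: 1. $f(0)=0$, and $f$ is concave and strictly increasing on $[0,\infty)$; 2. $f\in C^2[0,\infty)$ and there exists a constant $c_0>0$ such that $f''(r)-\frac14 r\kappa(r)f'(r)\le-\frac{c_0}{2}f(r)$ for all $r\ge0$; 3. there exists a constant $\varphi_0>0$ such that $\frac{\varphi_0}{4}r\le f(r)\le r$ for all $r\ge0$. The constants $c_0,\varphi_0$ depend only on the function $\kappa$.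
   Context: At $r=0$, where $\kappa$ is undefined, the term $\frac14 r\kappa(r)f'(r)$ is interpreted as $0$. *)

theory Defs
  imports "HOL-Analysis.Analysis"
begin

end

theory Submission
  imports Defs
begin

(* The profile f r = \<phi> r + (1 - \<phi>) (1 - exp (-B r)) / B is an explicit witness: f' decreases
   from 1 to \<phi>, and f'' = -(1 - \<phi>) B exp (-B r).  On [0, R], where \<kappa> is only bounded below by -M,
   a rate B \<ge> M R / 4 + 1 lets the strongly negative f'' absorb the drift term r \<kappa> f' / 4,
   provided the linear part \<phi> is small.  Beyond R, where \<kappa> \<ge> k > 0, the drift term alone
   gives -k \<phi> r / 4 \<le> -k \<phi> f / 4 because f' \<ge> \<phi> and f \<le> r. *)

definition exp_profile :: "real \<Rightarrow> real \<Rightarrow> real \<Rightarrow> real" where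
  "exp_profile \<phi> B r = \<phi> * r + (1 - \<phi>) * (1 - exp (- B * r)) / B"

definition exp_profile_deriv :: "real \<Rightarrow> real \<Rightarrow> real \<Rightarrow> real" where
  "exp_profile_deriv \<phi> B r = \<phi> + (1 - \<phi>) * exp (- B * r)"

definition exp_profile_deriv2 :: "real \<Rightarrow> real \<Rightarrow> real \<Rightarrow> real" where
  "exp_profile_deriv2 \<phi> B r = - (1 - \<phi>) * B * exp (- B * r)"

lemma exp_profile_0 [simp]: "exp_profile \<phi> B 0 = 0"
  by (simp add: exp_profile_def)

lemma has_real_derivative_exp_profile:
  "B \<noteq> 0 \<Longrightarrow> (exp_profile \<phi> B has_real_derivative exp_profile_deriv \<phi> B r) (at r)"
  unfolding exp_profile_def exp_profile_deriv_def
  by (auto intro!: derivative_eq_intros simp: field_simps)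

lemma has_real_derivative_exp_profile_deriv:
  "(exp_profile_deriv \<phi> B has_real_derivative exp_profile_deriv2 \<phi> B r) (at r)"
  unfolding exp_profile_deriv_def exp_profile_deriv2_def
  by (auto intro!: derivative_eq_intros simp: field_simps)

lemma continuous_on_exp_profile_deriv2: "continuous_on A (exp_profile_deriv2 \<phi> B)"
  unfolding exp_profile_deriv2_def by (intro continuous_intros)

lemma exp_profile_deriv_ge: "\<phi> \<le> 1 \<Longrightarrow> \<phi> \<le> exp_profile_deriv \<phi> B r"
  by (simp add: exp_profile_deriv_def)

lemma exp_profile_deriv_antimono:
  "\<phi> \<le> 1 \<Longrightarrow> 0 \<le> B \<Longrightarrow> x \<le> y \<Longrightarrow> exp_profile_deriv \<phi> B y \<le> exp_profile_deriv \<phi> B x"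
  unfolding exp_profile_deriv_def by (auto intro!: mult_left_mono)

lemma exp_profile_deriv2_nonpos: "\<phi> \<le> 1 \<Longrightarrow> 0 \<le> B \<Longrightarrow> exp_profile_deriv2 \<phi> B r \<le> 0"
  unfolding exp_profile_deriv2_def by (simp add: mult_nonpos_nonneg)

lemma concave_on_exp_profile:
  assumes "\<phi> \<le> 1" "0 < B" "connected A"
  shows "concave_on A (exp_profile \<phi> B)"
  unfolding concave_on_def
proof (rule convex_on_realI[where f' = "\<lambda>x. - exp_profile_deriv \<phi> B x"])
  show "((\<lambda>x. - exp_profile \<phi> B x) has_real_derivative - exp_profile_deriv \<phi> B x) (at x)" for x
    using has_real_derivative_exp_profile[of B] assms by (auto intro!: derivative_eq_intros)
  show "- exp_profile_deriv \<phi> B x \<le> - exp_profile_deriv \<phi> B y" if "x \<le> y" for x y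
    using exp_profile_deriv_antimono[OF _ _ that] assms by simp
qed (fact assms)

lemma strict_mono_on_exp_profile:
  assumes "0 < \<phi>" "\<phi> \<le> 1" "0 < B"
  shows "strict_mono_on A (exp_profile \<phi> B)"
proof (rule strict_mono_onI)
  fix x y :: real
  assume "x < y"
  then show "exp_profile \<phi> B x < exp_profile \<phi> B y"
  proof (rule DERIV_pos_imp_increasing)
    fix t
    show "\<exists>d. (exp_profile \<phi> B has_real_derivative d) (at t) \<and> 0 < d"
      using has_real_derivative_exp_profile exp_profile_deriv_ge assms
      by (metis less_le_trans less_numeral_extra(3))
  qed
qed

lemma exp_profile_le:
  assumes "\<phi> \<le> 1" "0 < B" "0 \<le> r"
  shows "exp_profile \<phi> B r \<le> r"
proof -
  have "1 - exp (- B * r) \<le> B * r"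
    using exp_ge_add_one_self[of "- B * r"] by simp
  then have "(1 - exp (- B * r)) / B \<le> r"
    using assms by (simp add: divide_le_eq mult.commute)
  then have "(1 - \<phi>) * ((1 - exp (- B * r)) / B) \<le> (1 - \<phi>) * r"
    using assms by (intro mult_left_mono) auto
  then show ?thesis
    unfolding exp_profile_def by (simp add: algebra_simps)
qed

lemma exp_profile_ge:
  assumes "\<phi> \<le> 1" "0 < B" "0 \<le> r"
  shows "\<phi> * r \<le> exp_profile \<phi> B r"
proof -
  have "exp (- B * r) \<le> 1"
    using assms by simp
  then show ?thesis
    using assms unfolding exp_profile_def by simp
qed

lemma exp_profile_nonneg: "0 \<le> \<phi> \<Longrightarrow> \<phi> \<le> 1 \<Longrightarrow> 0 < B \<Longrightarrow> 0 \<le> r \<Longrightarrow> 0 \<le> exp_profile \<phi> B r"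
  using exp_profile_ge[of \<phi> B r] by (meson mult_nonneg_nonneg order_trans)

lemma exp_profile_drift_ineq_far:
  assumes "0 < \<phi>" "\<phi> \<le> 1" "0 < B" "0 \<le> r" "0 \<le> k" "k \<le> \<kappa>"
  shows "exp_profile_deriv2 \<phi> B r - 1/4 * r * \<kappa> * exp_profile_deriv \<phi> B r
           \<le> - (k * \<phi> / 4) * exp_profile \<phi> B r"
proof -
  have "k * \<phi> \<le> \<kappa> * exp_profile_deriv \<phi> B r"
    using assms exp_profile_deriv_ge[of \<phi> B r] by (intro mult_mono) auto
  then have "k * \<phi> * r \<le> \<kappa> * exp_profile_deriv \<phi> B r * r"
    using \<open>0 \<le> r\<close> by (rule mult_right_mono)
  then have "k * \<phi> / 4 * r \<le> 1/4 * r * \<kappa> * exp_profile_deriv \<phi> B r"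
    by (simp add: mult_ac)
  moreover have "k * \<phi> / 4 * exp_profile \<phi> B r \<le> k * \<phi> / 4 * r"
    using assms exp_profile_le[of \<phi> B r] by (intro mult_left_mono) auto
  ultimately show ?thesis
    using exp_profile_deriv2_nonpos[of \<phi> B r] assms by simp
qed

lemma exp_profile_drift_ineq_near:
  assumes "0 \<le> M" "M * R / 4 + 1 \<le> B" "0 \<le> \<phi>" "\<phi> \<le> 1/4" "\<phi> * (M * R) \<le> exp (- B * R)"
    and "0 \<le> r" "r \<le> R" "- M \<le> \<kappa>"
  shows "exp_profile_deriv2 \<phi> B r - 1/4 * r * \<kappa> * exp_profile_deriv \<phi> B r \<le> - exp (- B * R) / 2"
proof -
  let ?e = "exp (- B * r)"
  have "0 \<le> R"
    using assms by linarith
  then have "0 \<le> B"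
    using assms mult_nonneg_nonneg[OF \<open>0 \<le> M\<close> \<open>0 \<le> R\<close>] by linarith
  have drift: "- (1/4 * r * \<kappa> * exp_profile_deriv \<phi> B r) \<le> M / 4 * r * exp_profile_deriv \<phi> B r"
  proof -
    have "0 \<le> r * exp_profile_deriv \<phi> B r"
      using assms exp_profile_deriv_ge[of \<phi> B r] by simp
    then have "r * exp_profile_deriv \<phi> B r * (- \<kappa>) \<le> r * exp_profile_deriv \<phi> B r * M"
      using assms by (intro mult_left_mono) auto
    then show ?thesis by (simp add: algebra_simps)
  qed
  have "exp_profile_deriv2 \<phi> B r + M / 4 * r * exp_profile_deriv \<phi> B r
          = (1 - \<phi>) * ?e * (M / 4 * r - B) + M / 4 * r * \<phi>"
    unfolding exp_profile_deriv_def exp_profile_deriv2_def by (simp add: algebra_simps)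
  also have "\<dots> \<le> (1 - \<phi>) * ?e * (-1) + M / 4 * R * \<phi>"
  proof -
    have "M / 4 * r \<le> M / 4 * R"
      using assms by (intro mult_left_mono) auto
    then have "(1 - \<phi>) * ?e * (M / 4 * r - B) \<le> (1 - \<phi>) * ?e * (-1)"
      using assms by (intro mult_left_mono) auto
    moreover have "M / 4 * r * \<phi> \<le> M / 4 * R * \<phi>"
      using assms by (intro mult_right_mono mult_left_mono) auto
    ultimately show ?thesis by linarith
  qed
  also have "\<dots> \<le> - (3/4) * exp (- B * R) + exp (- B * R) / 4"
  proof -
    have "B * r \<le> B * R"
      using assms \<open>0 \<le> B\<close> by (intro mult_left_mono) auto
    then have "3/4 * exp (- B * R) \<le> (1 - \<phi>) * ?e"
      using assms \<open>0 \<le> B\<close> by (intro mult_mono) auto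
    moreover have "M / 4 * R * \<phi> \<le> exp (- B * R) / 4"
      using assms by (simp add: algebra_simps)
    ultimately show ?thesis by simp
  qed
  finally show ?thesis
    using drift by simp
qed

lemma exp_profile_parameters:
  fixes \<kappa> :: "real \<Rightarrow> real"
  assumes "0 \<le> M" "0 < R" "0 < k"
    and kappa_ge_M: "\<And>r. 0 < r \<Longrightarrow> - M \<le> \<kappa> r"
    and kappa_ge_k: "\<And>r. R \<le> r \<Longrightarrow> k \<le> \<kappa> r"
  obtains \<phi> B c0 where "0 < \<phi>" "\<phi> \<le> 1" "0 < B" "0 < c0"
    "\<And>r. 0 \<le> r \<Longrightarrow> exp_profile_deriv2 \<phi> B r
       - (if r = 0 then 0 else 1/4 * r * \<kappa> r * exp_profile_deriv \<phi> B r)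
       \<le> - (c0 / 2) * exp_profile \<phi> B r"
proof
  define B where "B = M * R / 4 + 1"
  define E where "E = exp (- B * R)"
  define \<phi> where "\<phi> = min (1/4) (E / (M * R + 1))"
  define c0 where "c0 = min (E / R) (k * \<phi> / 2)"
  have "0 \<le> M * R" "0 < E"
    using assms by (simp_all add: E_def)
  then have \<phi>: "0 < \<phi>" "\<phi> \<le> 1/4" "\<phi> * (M * R) \<le> E"
    by (auto simp: \<phi>_def min_def field_simps)
  show "0 < \<phi>" "\<phi> \<le> 1" "0 < B" "0 < c0"
    using \<phi> assms \<open>0 < E\<close> \<open>0 \<le> M * R\<close> by (auto simp: B_def c0_def add_nonneg_pos)
  fix r :: real
  assume "0 \<le> r"
  let ?f = "exp_profile \<phi> B r"
  have f: "0 \<le> ?f" "?f \<le> r"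
    using \<phi> \<open>0 \<le> r\<close> \<open>0 \<le> M * R\<close> exp_profile_nonneg exp_profile_le by (auto simp: B_def)
  \<comment> \<open>At r = 0 the drift term vanishes, so the value of \<kappa> there is irrelevant.\<close>
  define \<kappa>\<^sub>0 where "\<kappa>\<^sub>0 = (if r = 0 then 0 else \<kappa> r)"
  have "exp_profile_deriv2 \<phi> B r - 1/4 * r * \<kappa>\<^sub>0 * exp_profile_deriv \<phi> B r \<le> - (c0 / 2) * ?f"
  proof (cases "r < R")
    case True
    have "c0 * ?f \<le> E / R * R"
      using f True \<open>0 < c0\<close> by (intro mult_mono) (auto simp: c0_def)
    moreover have "- M \<le> \<kappa>\<^sub>0"
      using kappa_ge_M \<open>0 \<le> r\<close> \<open>0 \<le> M\<close> by (auto simp: \<kappa>\<^sub>0_def)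
    ultimately show ?thesis
      using exp_profile_drift_ineq_near[of M R B \<phi> r \<kappa>\<^sub>0] \<phi> True \<open>0 \<le> r\<close> assms
      by (simp add: B_def E_def)
  next
    case False
    then have "k \<le> \<kappa>\<^sub>0"
      using kappa_ge_k \<open>0 < R\<close> by (auto simp: \<kappa>\<^sub>0_def)
    moreover have "c0 / 2 * ?f \<le> k * \<phi> / 4 * ?f"
      using f by (intro mult_right_mono) (auto simp: c0_def)
    ultimately show ?thesis
      using exp_profile_drift_ineq_far[of \<phi> B r k \<kappa>\<^sub>0] \<phi> \<open>0 < B\<close> \<open>0 \<le> r\<close> \<open>0 < k\<close> by simp
  qed
  then show "exp_profile_deriv2 \<phi> B r - (if r = 0 then 0 else 1/4 * r * \<kappa> r * exp_profile_deriv \<phi> B r)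
               \<le> - (c0 / 2) * ?f"
    by (cases "r = 0") (simp_all add: \<kappa>\<^sub>0_def)
qed

lemma Liminf_pos_imp_eventually_gt:
  assumes "0 < Liminf F (\<lambda>x. ereal (g x))"
  shows "\<exists>k>0. eventually (\<lambda>x. k < g x) F"
proof -
  obtain k where "0 < ereal k" "ereal k < Liminf F (\<lambda>x. ereal (g x))"
    using ereal_dense2[OF assms] by blast
  then show ?thesis
    using less_LiminfD by fastforce
qed

theorem lemma1:
  fixes \<sigma> :: real and b :: "'a::euclidean_space \<Rightarrow> 'a" and \<kappa> :: "real \<Rightarrow> real"
  assumes sigma_pos: "\<sigma> > 0"
    and kappa_bound: "\<And>r x y. r > 0 \<Longrightarrow> norm (x - y) = r \<Longrightarrow>
           \<kappa> r \<le> - (2 / \<sigma>\<^sup>2) * (((x - y) \<bullet> (b x - b y)) / (norm (x - y))\<^sup>2)"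
    and kappa_cont: "continuous_on {0<..} \<kappa>"
    and kappa_bdd_below: "\<exists>m. \<forall>r>0. m \<le> \<kappa> r"
    and kappa_liminf: "Liminf at_top (\<lambda>r. ereal (\<kappa> r)) > 0"
  shows "\<exists>f f' f'' c0 \<phi>0.
           f 0 = 0 \<and> concave_on {0..} f \<and> strict_mono_on {0..} f \<and>
           (\<forall>r\<ge>0. (f has_real_derivative f' r) (at r within {0..})) \<and>
           (\<forall>r\<ge>0. (f' has_real_derivative f'' r) (at r within {0..})) \<and>
           continuous_on {0..} f'' \<and>
           c0 > 0 \<and>
           (\<forall>r\<ge>0. f'' r - (if r = 0 then 0 else (1/4) * r * \<kappa> r * f' r) \<le> - (c0 / 2) * f r) \<and>
           \<phi>0 > 0 \<and>
           (\<forall>r\<ge>0. \<phi>0 / 4 * r \<le> f r \<and> f r \<le> r)"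
proof -
  obtain m where m: "\<And>r. 0 < r \<Longrightarrow> m \<le> \<kappa> r"
    using kappa_bdd_below by blast
  obtain k R where "0 < k" and kR: "\<And>r. R \<le> r \<Longrightarrow> k < \<kappa> r"
    using Liminf_pos_imp_eventually_gt[OF kappa_liminf] by (auto simp: eventually_at_top_linorder)
  obtain \<phi> B c0 where "0 < \<phi>" "\<phi> \<le> 1" "0 < B" "0 < c0" and drift_ineq:
    "\<And>r. 0 \<le> r \<Longrightarrow> exp_profile_deriv2 \<phi> B r
       - (if r = 0 then 0 else 1/4 * r * \<kappa> r * exp_profile_deriv \<phi> B r)
       \<le> - (c0 / 2) * exp_profile \<phi> B r"
    by (rule exp_profile_parameters[of "max 0 (- m)" "max R 1" k \<kappa>])
      (use m kR \<open>0 < k\<close> in \<open>force+\<close>)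
  show ?thesis
    using \<open>0 < \<phi>\<close> \<open>\<phi> \<le> 1\<close> \<open>0 < B\<close> \<open>0 < c0\<close> drift_ineq
      concave_on_exp_profile strict_mono_on_exp_profile exp_profile_ge exp_profile_le
      continuous_on_exp_profile_deriv2 has_real_derivative_exp_profile_deriv
      has_real_derivative_exp_profile[of B \<phi>]
    by (intro exI[of _ "exp_profile \<phi> B"] exI[of _ "exp_profile_deriv \<phi> B"]
        exI[of _ "exp_profile_deriv2 \<phi> B"] exI[of _ c0] exI[of _ "4 * \<phi>"] conjI allI impI)
      (auto intro: has_field_derivative_at_within)
qed

end
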